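(* Let $A\in(0,1)$, $M<0$, $Q>0$, $S>0$ and consider the planar system $$\frac{du}{d\tau}=u^2\big((u+A)(1-u)(u-M)-Qv\big),\qquad \frac{dv}{d\tau}=S(u+A)(u-v)v .$$ Put $T=1-A+M$. (a) If $T^3<-27AM$, then no positive equilibrium $(\tilde u,\tilde u)$, $\tilde u>0$, of the system is a saddle. (b) If a positive equilibrium $(\tilde u,\tilde u)$ satisfies $\tilde u>T+\sqrt{T^2+3(A-M+AM)}$, then it is not a repeller.
   Context: The positive equilibria of the system are exactly the points $(u,u)$ with $u>0$ and $(u+A)(1-u)(u-M)=Qu$. *)

theory Defs
  imports "HOL-Analysis.Analysis"
begin

definition Fu :: "real \<Rightarrow> real \<Rightarrow> real \<Rightarrow> real \<Rightarrow> real \<Rightarrow> real" where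
  "Fu A M Q u v = u^2 * ((u + A) * (1 - u) * (u - M) - Q * v)"

definition Fv :: "real \<Rightarrow> real \<Rightarrow> real \<Rightarrow> real \<Rightarrow> real" where
  "Fv A S u v = S * (u + A) * (u - v) * v"

definition is_equilibrium :: "real \<Rightarrow> real \<Rightarrow> real \<Rightarrow> real \<Rightarrow> real \<Rightarrow> real \<Rightarrow> bool" where
  "is_equilibrium A M Q S u v \<longleftrightarrow> Fu A M Q u v = 0 \<and> Fv A S u v = 0"

definition J11 :: "real \<Rightarrow> real \<Rightarrow> real \<Rightarrow> real \<Rightarrow> real \<Rightarrow> real" where
  "J11 A M Q u v = deriv (\<lambda>x. Fu A M Q x v) u"
definition J12 :: "real \<Rightarrow> real \<Rightarrow> real \<Rightarrow> real \<Rightarrow> real \<Rightarrow> real" where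
  "J12 A M Q u v = deriv (\<lambda>y. Fu A M Q u y) v"
definition J21 :: "real \<Rightarrow> real \<Rightarrow> real \<Rightarrow> real \<Rightarrow> real" where
  "J21 A S u v = deriv (\<lambda>x. Fv A S x v) u"
definition J22 :: "real \<Rightarrow> real \<Rightarrow> real \<Rightarrow> real \<Rightarrow> real" where
  "J22 A S u v = deriv (\<lambda>y. Fv A S u y) v"

definition jac_eigenvalue :: "real \<Rightarrow> real \<Rightarrow> real \<Rightarrow> real \<Rightarrow> real \<Rightarrow> real \<Rightarrow> complex \<Rightarrow> bool" where
  "jac_eigenvalue A M Q S u v z \<longleftrightarrow>
     (complex_of_real (J11 A M Q u v) - z) * (complex_of_real (J22 A S u v) - z)
       - complex_of_real (J12 A M Q u v) * complex_of_real (J21 A S u v) = 0"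

definition is_saddle :: "real \<Rightarrow> real \<Rightarrow> real \<Rightarrow> real \<Rightarrow> real \<Rightarrow> real \<Rightarrow> bool" where
  "is_saddle A M Q S u v \<longleftrightarrow> is_equilibrium A M Q S u v \<and>
     (\<exists>l1 l2 :: real. l1 < 0 \<and> 0 < l2 \<and>
        jac_eigenvalue A M Q S u v (complex_of_real l1) \<and>
        jac_eigenvalue A M Q S u v (complex_of_real l2))"

definition is_repeller :: "real \<Rightarrow> real \<Rightarrow> real \<Rightarrow> real \<Rightarrow> real \<Rightarrow> real \<Rightarrow> bool" where
  "is_repeller A M Q S u v \<longleftrightarrow> is_equilibrium A M Q S u v \<and>
     (\<forall>z. jac_eigenvalue A M Q S u v z \<longrightarrow> Re z > 0)"

end

theory Submission
  imports Defs
begin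

text \<open>Write \<open>p u = (u + A) (1 - u) (u - M)\<close>, so that the positive equilibria are the solutions
  of \<open>p u = Q u\<close>, and \<open>T = 1 - A + M\<close>, \<open>B = A - M + A M\<close>, so that \<open>p' u = -3 u\<^sup>2 + 2 T u + B\<close>.
  At a positive equilibrium \<open>(u, u)\<close> the Jacobian has trace \<open>u\<^sup>2 p' u - S u (u + A)\<close> and, after
  eliminating \<open>Q\<close> with the equilibrium equation, determinant \<open>S u\<^sup>2 (u + A) (2 u\<^sup>3 - T u\<^sup>2 - A M)\<close>.
  A saddle needs a negative determinant, but \<open>T u\<^sup>2 - 2 u\<^sup>3 \<le> T\<^sup>3/27\<close> for \<open>u > 0\<close>, so
  \<open>T\<^sup>3 < -27 A M\<close> makes the determinant positive. Beyond the larger root \<open>(T + sqrt (T\<^sup>2 + 3 B))/3\<close>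
  of \<open>p'\<close> the trace is negative, so some eigenvalue has non-positive real part.\<close>

lemma J11_eq: "J11 A M Q u v = 2*u*((u + A) * (1 - u) * (u - M) - Q * v)
   + u^2 * (-3*u^2 + 2*(1-A+M)*u + (A - M + A*M))"
  unfolding J11_def Fu_def
  by (rule DERIV_imp_deriv) (rule derivative_eq_intros refl | simp add: algebra_simps power2_eq_square)+

lemma J12_eq: "J12 A M Q u v = - Q * u^2"
  unfolding J12_def Fu_def
  by (rule DERIV_imp_deriv) (rule derivative_eq_intros refl | simp)+

lemma J21_eq: "J21 A S u v = S * ((u - v) * v + (u + A) * v)"
  unfolding J21_def Fv_def
  by (rule DERIV_imp_deriv) (rule derivative_eq_intros refl | simp add: algebra_simps)+

lemma J22_eq: "J22 A S u v = S * (u + A) * (u - 2 * v)"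
  unfolding J22_def Fv_def
  by (rule DERIV_imp_deriv) (rule derivative_eq_intros refl | simp add: algebra_simps)+

lemma is_equilibrium_diag_iff:
  assumes "u \<noteq> 0"
  shows "is_equilibrium A M Q S u u \<longleftrightarrow> (u + A) * (1 - u) * (u - M) = Q * u"
  using assms unfolding is_equilibrium_def Fu_def Fv_def by simp

lemma jac_eigenvalue_of_real_iff:
  "jac_eigenvalue A M Q S u v (complex_of_real l) \<longleftrightarrow>
     (J11 A M Q u v - l) * (J22 A S u v - l) - J12 A M Q u v * J21 A S u v = 0"
  unfolding jac_eigenvalue_def
  by (metis (no_types, opaque_lifting) of_real_diff of_real_mult of_real_eq_0_iff)

lemma char_poly_opposite_sign_roots_imp_det_neg:
  fixes a b c d l1 l2 :: real
  assumes "(a - l1) * (d - l1) - b * c = 0" and "(a - l2) * (d - l2) - b * c = 0"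
    and "l1 < 0" and "0 < l2"
  shows "a * d - b * c < 0"
proof -
  have "(l2 - l1) * (l1 + l2 - (a + d)) = 0"
    using assms(1,2) by (simp add: algebra_simps power2_eq_square)
  then have trace: "l1 + l2 = a + d"
    using assms(3,4) by simp
  have "a * d - b * c = l1 * (a + d) - l1 * l1"
    using assms(1) by (simp add: algebra_simps)
  also have "\<dots> = l1 * l2"
    using trace[symmetric] by (simp add: algebra_simps)
  finally show ?thesis
    using assms(3,4) by (simp add: mult_neg_pos)
qed

lemma char_poly_root_Re_nonpos_if_trace_neg:
  fixes a b c d :: real
  assumes "a + d < 0"
  obtains z where "(complex_of_real a - z) * (complex_of_real d - z)
      - complex_of_real b * complex_of_real c = 0"
    and "Re z \<le> 0"
proof -
  define t where "t = complex_of_real (a + d)"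
  define w where "w = csqrt (t^2/4 - complex_of_real (a*d - b*c))"
  have root: "(complex_of_real a - z) * (complex_of_real d - z)
      - complex_of_real b * complex_of_real c = 0" if "z = t/2 + w \<or> z = t/2 - w" for z
  proof -
    have "(z - t/2)^2 = t^2/4 - complex_of_real (a*d - b*c)"
      using that unfolding w_def by auto
    then show ?thesis
      unfolding t_def by (simp add: algebra_simps power2_eq_square)
  qed
  have "Re (t/2 + w) + Re (t/2 - w) = a + d"
    unfolding t_def by simp
  then have "Re (t/2 + w) \<le> 0 \<or> Re (t/2 - w) \<le> 0"
    using assms by linarith
  then show ?thesis
    using that root by blast
qed

lemma diag_equilibrium_trace:
  assumes "(u + A) * (1 - u) * (u - M) = Q * u"
  shows "J11 A M Q u u + J22 A S u u
    = u^2 * (-3*u^2 + 2*(1-A+M)*u + (A - M + A*M)) - S * u * (u + A)"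
  using assms unfolding J11_eq J22_eq by (simp add: algebra_simps)

lemma diag_equilibrium_det:
  assumes "(u + A) * (1 - u) * (u - M) = Q * u"
  shows "J11 A M Q u u * J22 A S u u - J12 A M Q u u * J21 A S u u
    = S * u^2 * (u + A) * (2*u^3 - (1-A+M)*u^2 - A*M)"
proof -
  have "J11 A M Q u u * J22 A S u u - J12 A M Q u u * J21 A S u u
      = S * u^2 * (u + A) * (Q * u - u * (-3*u^2 + 2*(1-A+M)*u + (A - M + A*M)))"
    using assms unfolding J11_eq J12_eq J21_eq J22_eq
    by (simp add: algebra_simps power2_eq_square)
  also have "Q * u = (u + A) * (1 - u) * (u - M)"
    using assms by simp
  finally show ?thesis
    by (simp add: algebra_simps power2_eq_square power3_eq_cube)
qed

lemma cube_bound_imp_cubic_pos: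
  fixes T c u :: real
  assumes "0 < c" and "T^3 < 27 * c" and "0 < u"
  shows "T * u^2 < 2 * u^3 + c"
proof (cases "T \<le> 0")
  case True
  then have "T * u^2 \<le> 0"
    by (simp add: mult_nonpos_nonneg)
  moreover have "0 < u^3"
    using assms(3) by simp
  ultimately show ?thesis
    using assms(1) by linarith
next
  case False
  have "T^3/27 - (T * u^2 - 2 * u^3) = (u - T/3)^2 * (2*u + T/3)"
    by (simp add: algebra_simps power2_eq_square power3_eq_cube)
  also have "\<dots> \<ge> 0"
    using False assms(3) by simp
  finally show ?thesis
    using assms(2) by linarith
qed

lemma quadratic_neg_beyond_larger_root:
  fixes T B u :: real
  assumes "0 \<le> B" and "T + sqrt (T^2 + 3 * B) < u"
  shows "-3*u^2 + 2*T*u + B < 0"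
proof -
  define s where "s = sqrt (T^2 + 3 * B)"
  have s2: "s^2 = T^2 + 3 * B"
    unfolding s_def using assms(1) by simp
  have "\<bar>T\<bar> \<le> s"
    unfolding s_def using assms(1) by (intro real_le_rsqrt) simp
  then have "0 < 3*u - T - s" and "0 < 3*u - T + s"
    using assms(2) unfolding s_def[symmetric] by linarith+
  then have "0 < (3*u - T - s) * (3*u - T + s)"
    by simp
  also have "(3*u - T - s) * (3*u - T + s) = -3 * (-3*u^2 + 2*T*u + B)"
    using s2 by (simp add: algebra_simps power2_eq_square)
  finally show ?thesis
    by simp
qed

theorem corollary1:
  fixes A M Q S :: real
  assumes "0 < A" and "A < 1" and "M < 0" and "Q > 0" and "S > 0"
  defines "T \<equiv> 1 - A + M"
  shows "(T ^ 3 < - 27 * A * M \<longrightarrow>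
           (\<forall>u > 0. is_equilibrium A M Q S u u \<longrightarrow> \<not> is_saddle A M Q S u u))
       \<and> (\<forall>u > 0. is_equilibrium A M Q S u u \<and> u > T + sqrt (T ^ 2 + 3 * (A - M + A * M))
           \<longrightarrow> \<not> is_repeller A M Q S u u)"
proof (intro conjI impI allI)
  fix u :: real
  assume "T ^ 3 < - 27 * A * M" and "u > 0" and "is_equilibrium A M Q S u u"
  moreover have "0 < - (A * M)"
    using assms by (simp add: mult_pos_neg)
  ultimately have "0 < J11 A M Q u u * J22 A S u u - J12 A M Q u u * J21 A S u u"
    using cube_bound_imp_cubic_pos[of "- (A * M)" T u] assms
    by (simp add: is_equilibrium_diag_iff diag_equilibrium_det T_def)
  then show "\<not> is_saddle A M Q S u u"
    unfolding is_saddle_def jac_eigenvalue_of_real_iff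
    using char_poly_opposite_sign_roots_imp_det_neg by force
next
  fix u :: real
  assume "u > 0" and "is_equilibrium A M Q S u u \<and> u > T + sqrt (T ^ 2 + 3 * (A - M + A * M))"
  then have u: "u > 0" and equilibrium: "(u + A) * (1 - u) * (u - M) = Q * u"
    and beyond_root: "u > T + sqrt (T ^ 2 + 3 * (A - M + A * M))"
    by (simp_all add: is_equilibrium_diag_iff)
  have "0 < (- M) * (1 - A)"
    using assms by (intro mult_pos_pos) simp_all
  then have "0 \<le> A - M + A * M"
    using assms(1) by (simp add: algebra_simps)
  then have "-3*u^2 + 2*(1-A+M)*u + (A - M + A*M) < 0"
    using quadratic_neg_beyond_larger_root beyond_root unfolding T_def by blast
  then have "u^2 * (-3*u^2 + 2*(1-A+M)*u + (A - M + A*M)) < 0"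
    using u by (simp add: mult_pos_neg)
  moreover have "0 < S * u * (u + A)"
    using u assms by simp
  ultimately have "J11 A M Q u u + J22 A S u u < 0"
    unfolding diag_equilibrium_trace[OF equilibrium] by linarith
  then obtain z where "jac_eigenvalue A M Q S u u z" and "Re z \<le> 0"
    unfolding jac_eigenvalue_def by (rule char_poly_root_Re_nonpos_if_trace_neg)
  then show "\<not> is_repeller A M Q S u u"
    unfolding is_repeller_def by force
qed

end
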